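(* Assume the standing hypotheses and let $p\in U_\delta(p_0)$, $\mu>0$. The following are equivalent: (i) the threshold $M(p)$ is a resonance of $H_\mu(p)$ (and then the resonance states are $f(q)=\frac{C\mu(p)\varphi(q)}{M(p)-w_p(q)}$, $C\neq0$ constant); (ii) $\varphi(\mathbf{q}_0(p))\neq0$ and $\Delta(\mu,p;M(p))=0$; (iii) $\varphi(\mathbf{q}_0(p))\neq0$ and $\mu=\mu(p)$.
   Context: Let $\mathbb{T}^3=(\mathbb{R}/2\pi\mathbb{Z})^3$, identified with $(-\pi,\pi]^3$, with Lebesgue measure $ds$. Standing hypotheses: $\varphi:\mathbb{T}^3\to\mathbb{R}$ is real-analytic and not identically zero; $w:\mathbb{T}^3\times\mathbb{T}^3\to\mathbb{R}$ is real-analytic with a unique global maximum at $(p_0,q_0)$, which is non-degenerate (negative definite Hessian). Write $w_p(q)=w(p,q)$, $M(p)=\max_q w_p(q)$. For $\mu>0$, $p\in\mathbb{T}^3$, $H_\mu(p)$ is the operator on $L^2(\mathbb{T}^3)$ given by $(H_\mu(p)f)(q)=w_p(q)f(q)+\mu\,\varphi(q)\int_{\mathbb{T}^3}\varphi(t)f(t)\,dt$. Fix $\delta>0$ small enough that on the $\delta$-neighborhood $U_\delta(p_0)\subset\mathbb{T}^3$ of $p_0$ there is a real-analytic map $\mathbf{q}_0:U_\delta(p_0)\to\mathbb{T}^3$ such that, for every $p\in U_\delta(p_0)$, $\mathbf{q}_0(p)$ is the unique maximum point of $w_p$ and this maximum is non-degenerate (such $\delta$ exists). For $p\in U_\delta(p_0)$,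 $\frac{1}{\mu(p)}=\int_{\mathbb{T}^3}\frac{\varphi^2(s)\,ds}{M(p)-w_p(s)}$ (finite and positive), and $\Delta(\mu,p;M(p)):=1-\mu\int_{\mathbb{T}^3}\frac{\varphi^2(s)\,ds}{M(p)-w_p(s)}=1-\mu/\mu(p)$. The threshold $M(p)$ is called a resonance of $H_\mu(p)$ if the equation $(w_p(q)-M(p))f(q)+\mu\varphi(q)\int_{\mathbb{T}^3}\varphi(t)f(t)\,dt=0$ (for a.e. $q$) has a nontrivial solution $f\in L^1(\mathbb{T}^3)\setminus L^2(\mathbb{T}^3)$ (a resonance state). *)

theory Defs
  imports "HOL-Analysis.Analysis"
begin

text \<open>The torus T^3 = (R/2 pi Z)^3 is modelled by 2 pi-periodic functions on R^3,
  with the fundamental domain (-pi,pi]^3 carrying Lebesgue measure.\<close>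

definition Tbox :: "(real^3) set" where
  "Tbox = {x. \<forall>i. - pi < x $ i \<and> x $ i \<le> pi}"

definition T3 :: "(real^3) measure" where
  "T3 = lebesgue_on Tbox"

definition in_lattice :: "real^3 \<Rightarrow> bool" where
  "in_lattice v \<longleftrightarrow> (\<forall>i. \<exists>k::int. v $ i = 2 * pi * of_int k)"

definition periodic3 :: "(real^3 \<Rightarrow> 'b) \<Rightarrow> bool" where
  "periodic3 f \<longleftrightarrow> (\<forall>x v. in_lattice v \<longrightarrow> f (x + v) = f x)"

definition real_analytic_on :: "'a::euclidean_space set \<Rightarrow> ('a \<Rightarrow> real) \<Rightarrow> bool" where
  "real_analytic_on S f \<longleftrightarrow>
     (\<forall>x\<in>S. \<exists>r>0. \<exists>c :: ('a \<Rightarrow> nat) \<Rightarrow> real. \<forall>y\<in>ball x r.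
        ((\<lambda>\<alpha>. c \<alpha> * (\<Prod>b\<in>Basis. ((y - x) \<bullet> b) ^ \<alpha> b)) has_sum f y)
          {\<alpha>. \<forall>b. b \<notin> Basis \<longrightarrow> \<alpha> b = 0})"

definition neg_def_hessian :: "('a::euclidean_space \<Rightarrow> real) \<Rightarrow> 'a \<Rightarrow> bool" where
  "neg_def_hessian f z \<longleftrightarrow>
     (\<exists>e>0. \<exists>D :: 'a \<Rightarrow> ('a \<Rightarrow>\<^sub>L real). \<exists>H.
        (\<forall>y\<in>ball z e. (f has_derivative blinfun_apply (D y)) (at y)) \<and>
        (D has_derivative H) (at z) \<and>
        (\<forall>v. v \<noteq> 0 \<longrightarrow> blinfun_apply (H v) v < 0))"

definition Mth :: "(real^3 \<Rightarrow> real^3 \<Rightarrow> real) \<Rightarrow> real^3 \<Rightarrow> real" where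
  "Mth w p = (SUP q\<in>Tbox. w p q)"

definition mu_p :: "(real^3 \<Rightarrow> real^3 \<Rightarrow> real) \<Rightarrow> (real^3 \<Rightarrow> real) \<Rightarrow> real^3 \<Rightarrow> real" where
  "mu_p w \<phi> p = 1 / (LINT s|T3. (\<phi> s)\<^sup>2 / (Mth w p - w p s))"

definition Delta :: "(real^3 \<Rightarrow> real^3 \<Rightarrow> real) \<Rightarrow> (real^3 \<Rightarrow> real) \<Rightarrow> real \<Rightarrow> real^3 \<Rightarrow> real" where
  "Delta w \<phi> \<mu> p = 1 - \<mu> * (LINT s|T3. (\<phi> s)\<^sup>2 / (Mth w p - w p s))"

definition resonance_state ::
  "(real^3 \<Rightarrow> real^3 \<Rightarrow> real) \<Rightarrow> (real^3 \<Rightarrow> real) \<Rightarrow> real \<Rightarrow> real^3 \<Rightarrow> (real^3 \<Rightarrow> real) \<Rightarrow> bool" where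
  "resonance_state w \<phi> \<mu> p f \<longleftrightarrow>
     integrable T3 f \<and> \<not> integrable T3 (\<lambda>q. (f q)\<^sup>2) \<and>
     (AE q in T3. (w p q - Mth w p) * f q + \<mu> * \<phi> q * (LINT t|T3. \<phi> t * f t) = 0)"

definition is_resonance ::
  "(real^3 \<Rightarrow> real^3 \<Rightarrow> real) \<Rightarrow> (real^3 \<Rightarrow> real) \<Rightarrow> real \<Rightarrow> real^3 \<Rightarrow> bool" where
  "is_resonance w \<phi> \<mu> p \<longleftrightarrow> (\<exists>f. resonance_state w \<phi> \<mu> p f)"

end

theory Submission
  imports Defs
begin

text \<open>At the threshold the equation forces f = \<mu> c \<phi> / (M(p) - w_p) almost everywhere, where
  c = \<integral> \<phi> f; integrating \<phi> f back gives c = \<mu> c \<integral> \<phi>^2 / (M(p) - w_p), so a nontrivial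
  solution exists only for \<Delta>(\<mu>, p; M(p)) = 0. Near the non-degenerate maximum q0(p), M(p) - w_p(q)
  is comparable to |q - q0(p)|^2. Since |q|^-2 is integrable in dimension 3, \<phi> / (M(p) - w_p) is
  always in L^1. Its square is in L^2 exactly when \<phi>(q0(p)) = 0: otherwise it dominates a
  multiple of the non-integrable |q - q0(p)|^-4, while a zero of the (Lipschitz) function \<phi> at
  q0(p) brings the bound down to |q - q0(p)|^-2.\<close>

lemma monomial_diff_abs_le_scaled:
  fixes u :: "'a::euclidean_space"
  assumes "norm u \<le> t" "0 \<le> t" "t \<le> s" "0 < s"
  shows "\<bar>(\<Prod>b\<in>Basis. (u \<bullet> b) ^ \<alpha> b) - (\<Prod>b\<in>Basis. 0 ^ \<alpha> b)\<bar> \<le> (t / s) * (\<Prod>b\<in>Basis. s ^ \<alpha> b)"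
proof (cases "\<forall>b\<in>Basis. \<alpha> b = 0")
  case False
  then obtain b0 where b0: "b0 \<in> Basis" "\<alpha> b0 \<noteq> 0" by auto
  define n where "n = (\<Sum>b\<in>Basis. \<alpha> b)"
  have "\<alpha> b0 \<le> n" unfolding n_def using b0(1) by (intro member_le_sum) auto
  then have n: "1 \<le> n" using b0(2) by linarith
  have "(\<Prod>b\<in>Basis. (0::real) ^ \<alpha> b) = 0" using b0 by (auto simp: prod_zero_iff)
  then have "\<bar>(\<Prod>b\<in>Basis. (u \<bullet> b) ^ \<alpha> b) - (\<Prod>b\<in>Basis. 0 ^ \<alpha> b)\<bar> = \<bar>\<Prod>b\<in>Basis. (u \<bullet> b) ^ \<alpha> b\<bar>"
    by (simp only: diff_zero)
  also have "\<dots> = (\<Prod>b\<in>Basis. \<bar>u \<bullet> b\<bar> ^ \<alpha> b)" by (simp add: abs_prod power_abs)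
  also have "\<dots> \<le> (\<Prod>b\<in>Basis. t ^ \<alpha> b)"
    using assms(1) by (intro prod_mono conjI power_mono) (auto intro: order_trans[OF Basis_le_norm])
  also have "\<dots> = t ^ n" by (simp add: n_def power_sum)
  also have "\<dots> = (t / s) ^ n * s ^ n" using assms(4) by (simp add: power_mult_distrib[symmetric])
  also have "\<dots> \<le> (t / s) * s ^ n"
    using n assms(2-4) by (intro mult_right_mono power_decreasing[of 1, simplified]) auto
  also have "\<dots> = (t / s) * (\<Prod>b\<in>Basis. s ^ \<alpha> b)" by (simp add: n_def power_sum)
  finally show ?thesis .
qed (use assms in simp)

text \<open>The value at the centre is the constant coefficient; every other coefficient contributes
  at most a fraction dist y x / s of its absolutely convergent value on the cube of side s.\<close>
lemma real_analytic_on_lipschitz_at: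
  fixes g :: "'a::euclidean_space \<Rightarrow> real"
  assumes "real_analytic_on S g" "x \<in> S"
  obtains K \<rho> where "\<rho> > 0" "\<And>y. dist y x < \<rho> \<Longrightarrow> \<bar>g y - g x\<bar> \<le> K * dist y x"
proof -
  define A where "A = {\<alpha>::'a\<Rightarrow>nat. \<forall>b. b \<notin> Basis \<longrightarrow> \<alpha> b = 0}"
  define m :: "'a \<Rightarrow> ('a \<Rightarrow> nat) \<Rightarrow> real" where "m = (\<lambda>u \<alpha>. \<Prod>b\<in>Basis. (u \<bullet> b) ^ \<alpha> b)"
  obtain r c where r: "r > 0" and series: "\<And>y. y \<in> ball x r \<Longrightarrow>
      ((\<lambda>\<alpha>. c \<alpha> * m (y - x) \<alpha>) has_sum g y) A"
    using assms unfolding real_analytic_on_def A_def m_def by blast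
  define s where "s = r / (real DIM('a) + 1)"
  have s: "s > 0" "s \<le> r" using r by (auto simp: s_def field_simps)
  define y0 where "y0 = x + (\<Sum>b\<in>Basis. s *\<^sub>R b)"
  have "norm (\<Sum>b\<in>(Basis::'a set). s *\<^sub>R b) \<le> s * real DIM('a)"
    using norm_sum[of "\<lambda>b. s *\<^sub>R b" "Basis::'a set"] s by (simp add: mult_ac)
  also have "\<dots> < r" using r s unfolding s_def by (simp add: field_simps)
  finally have "y0 \<in> ball x r" by (simp add: y0_def dist_norm)
  from series[OF this] have "(\<lambda>\<alpha>. c \<alpha> * (\<Prod>b\<in>Basis. s ^ \<alpha> b)) summable_on A"
    by (auto simp: y0_def m_def inner_sum_left_Basis intro: has_sum_imp_summable)
  then obtain S where "((\<lambda>\<alpha>. norm (c \<alpha> * (\<Prod>b\<in>Basis. s ^ \<alpha> b))) has_sum S) A"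
    using summable_on_iff_abs_summable_on_real[THEN iffD1] unfolding summable_on_def by blast
  then have S: "((\<lambda>\<alpha>. \<bar>c \<alpha> * (\<Prod>b\<in>Basis. s ^ \<alpha> b)\<bar>) has_sum S) A"
    by (simp only: real_norm_def)
  show thesis
  proof (rule that[OF s(1)])
    fix y assume y: "dist y x < s"
    define t where "t = dist y x"
    have t: "0 \<le> t" "t \<le> s" "norm (y - x) \<le> t" using y s unfolding t_def by (auto simp: dist_norm)
    have y_in: "y \<in> ball x r" using y s by (simp add: dist_commute)
    have diff: "((\<lambda>\<alpha>. c \<alpha> * m (y - x) \<alpha> - c \<alpha> * m 0 \<alpha>) has_sum (g y - g x)) A"
      using has_sum_add[OF series[OF y_in] has_sum_uminusI[OF series[of x]]] r by simp
    have major: "((\<lambda>\<alpha>. (t / s) * \<bar>c \<alpha> * (\<Prod>b\<in>Basis. s ^ \<alpha> b)\<bar>) has_sum ((t / s) * S)) A"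
      by (rule has_sum_cmult_right[OF S])
    have term_le: "\<bar>c \<alpha> * m (y - x) \<alpha> - c \<alpha> * m 0 \<alpha>\<bar> \<le> (t / s) * \<bar>c \<alpha> * (\<Prod>b\<in>Basis. s ^ \<alpha> b)\<bar>"
      for \<alpha>
    proof -
      have "\<bar>c \<alpha>\<bar> * \<bar>m (y - x) \<alpha> - m 0 \<alpha>\<bar> \<le> \<bar>c \<alpha>\<bar> * ((t / s) * (\<Prod>b\<in>Basis. s ^ \<alpha> b))"
        unfolding m_def using monomial_diff_abs_le_scaled[OF t(3,1,2) s(1)] by (intro mult_left_mono) auto
      then show ?thesis using s by (simp add: abs_mult prod_nonneg right_diff_distrib[symmetric] mult_ac)
    qed
    have "g y - g x \<le> (t / s) * S"
      by (rule has_sum_mono[OF diff major]) (use term_le abs_le_D1 in blast)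
    moreover have "- (g y - g x) \<le> (t / s) * S"
      by (rule has_sum_mono[OF has_sum_uminusI[OF diff] major]) (use term_le abs_le_D2 in blast)
    ultimately have "\<bar>g y - g x\<bar> \<le> (t / s) * S" by linarith
    then show "\<bar>g y - g x\<bar> \<le> S / s * dist y x" by (simp add: t_def mult.commute)
  qed
qed

lemma real_analytic_on_imp_continuous_on:
  fixes g :: "'a::euclidean_space \<Rightarrow> real"
  assumes "real_analytic_on S g"
  shows "continuous_on S g"
proof (intro continuous_at_imp_continuous_on ballI)
  fix x assume "x \<in> S"
  then obtain K \<rho> where "\<rho> > 0" and lip: "\<And>y. dist y x < \<rho> \<Longrightarrow> \<bar>g y - g x\<bar> \<le> K * dist y x"
    using real_analytic_on_lipschitz_at[OF assms] by blast
  then have "\<forall>\<^sub>F y in at x. norm (g y - g x) \<le> K * dist y x"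
    by (auto simp: eventually_at intro!: exI[of _ \<rho>])
  moreover have "((\<lambda>y. dist y x) \<longlongrightarrow> 0) (at x)"
    using tendsto_dist[OF tendsto_ident_at tendsto_const, of x x UNIV] by simp
  then have "((\<lambda>y. K * dist y x) \<longlongrightarrow> 0) (at x)" by (rule tendsto_mult_right_zero)
  ultimately have "((\<lambda>y. g y - g x) \<longlongrightarrow> 0) (at x)" by (rule Lim_null_comparison)
  then show "isCont g x" unfolding isCont_def by (rule LIM_zero_cancel)
qed

lemma quadratic_form_scaleR:
  fixes H :: "'a::real_normed_vector \<Rightarrow> ('a \<Rightarrow>\<^sub>L real)"
  assumes "bounded_linear H"
  shows "H (a *\<^sub>R v) (b *\<^sub>R v) = a * b * H v v"
proof -
  have "H (a *\<^sub>R v) = a *\<^sub>R H v" using assms by (simp add: linear_simps)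
  then show ?thesis by (simp add: blinfun.scaleR_right blinfun.scaleR_left)
qed

lemma neg_def_quadratic_form_le:
  fixes H :: "'a::euclidean_space \<Rightarrow> ('a \<Rightarrow>\<^sub>L real)"
  assumes H: "bounded_linear H" and neg: "\<And>v. v \<noteq> 0 \<Longrightarrow> H v v < 0"
  obtains l where "l > 0" "\<And>v. H v v \<le> - l * (norm v)\<^sup>2"
proof -
  obtain b :: 'a where "b \<in> Basis" using nonempty_Basis by blast
  then have "sphere (0::'a) 1 \<noteq> {}" by (auto intro!: exI[of _ b])
  moreover have "continuous_on (sphere 0 1) (\<lambda>v. H v v)"
    using linear_continuous_on[OF H] by (intro continuous_intros) auto
  ultimately obtain v0 where v0: "v0 \<in> sphere 0 1"
    and max: "\<And>v. v \<in> sphere 0 1 \<Longrightarrow> H v v \<le> H v0 v0"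
    using continuous_attains_sup[OF compact_sphere] by blast
  show thesis
  proof (rule that)
    show "- H v0 v0 > 0" using neg[of v0] v0 by fastforce
    fix v :: 'a
    show "H v v \<le> - (- H v0 v0) * (norm v)\<^sup>2"
    proof (cases "v = 0")
      case False
      define u where "u = (1 / norm v) *\<^sub>R v"
      have "H v v = norm v * norm v * H u u"
        using quadratic_form_scaleR[OF H, of "norm v" u "norm v"] False by (simp add: u_def)
      also have "\<dots> \<le> norm v * norm v * H v0 v0"
        using max[of u] False by (intro mult_left_mono) (auto simp: u_def)
      finally show ?thesis by (simp add: power2_eq_square mult_ac)
    qed (simp add: H linear_simps)
  qed
qed

lemma quadratic_form_abs_le:
  fixes H :: "'a::real_normed_vector \<Rightarrow> ('a \<Rightarrow>\<^sub>L real)"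
  assumes "bounded_linear H"
  obtains B where "B > 0" "\<And>v. \<bar>H v v\<bar> \<le> B * (norm v)\<^sup>2"
proof -
  obtain K where K: "K > 0" "\<And>v. norm (H v) \<le> norm v * K"
    using bounded_linear.pos_bounded[OF assms] by blast
  have "\<bar>H v v\<bar> \<le> K * (norm v)\<^sup>2" for v
  proof -
    have "\<bar>H v v\<bar> \<le> norm (H v) * norm v" using norm_blinfun[of "H v" v] by simp
    also have "\<dots> \<le> norm v * K * norm v" using K by (intro mult_right_mono) auto
    finally show ?thesis by (simp add: power2_eq_square mult_ac)
  qed
  then show thesis using K(1) that by blast
qed

lemma DERIV_linear_bounds_imp_bounds:
  fixes g g' :: "real \<Rightarrow> real"
  assumes deriv: "\<And>t. 0 \<le> t \<Longrightarrow> t \<le> 1 \<Longrightarrow> (g has_real_derivative g' t) (at t)"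
    and bounds: "\<And>t. 0 \<le> t \<Longrightarrow> t \<le> 1 \<Longrightarrow> a * t \<le> g' t \<and> g' t \<le> b * t"
  shows "g 0 + a / 2 \<le> g 1 \<and> g 1 \<le> g 0 + b / 2"
proof
  have D: "((\<lambda>t. g t - c / 2 * t\<^sup>2) has_real_derivative g' t - c * t) (at t)"
    if "0 \<le> t" "t \<le> 1" for c t
    using deriv[OF that] by (auto intro!: derivative_eq_intros)
  have "(\<lambda>t. g t - a / 2 * t\<^sup>2) 0 \<le> (\<lambda>t. g t - a / 2 * t\<^sup>2) 1"
  proof (rule DERIV_nonneg_imp_nondecreasing[of 0 1])
    fix t :: real assume t: "0 \<le> t" "t \<le> 1"
    show "\<exists>y. ((\<lambda>t. g t - a / 2 * t\<^sup>2) has_real_derivative y) (at t) \<and> 0 \<le> y"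
      using D[OF t, of a] bounds[OF t] by auto
  qed simp
  then show "g 0 + a / 2 \<le> g 1" by simp
  have "(\<lambda>t. g t - b / 2 * t\<^sup>2) 1 \<le> (\<lambda>t. g t - b / 2 * t\<^sup>2) 0"
  proof (rule DERIV_nonpos_imp_nonincreasing[of 0 1])
    fix t :: real assume t: "0 \<le> t" "t \<le> 1"
    show "\<exists>y. ((\<lambda>t. g t - b / 2 * t\<^sup>2) has_real_derivative y) (at t) \<and> y \<le> 0"
      using D[OF t, of b] bounds[OF t] by auto
  qed simp
  then show "g 1 \<le> g 0 + b / 2" by simp
qed

lemma has_real_derivative_along_ray:
  fixes f :: "'a::real_normed_vector \<Rightarrow> real"
  assumes "(f has_derivative blinfun_apply D) (at (z + t *\<^sub>R h))"
  shows "((\<lambda>s. f (z + s *\<^sub>R h)) has_real_derivative D h) (at t)"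
proof -
  have "((\<lambda>s. z + s *\<^sub>R h) has_derivative (\<lambda>s. s *\<^sub>R h)) (at t)"
    by (auto intro!: derivative_eq_intros)
  then have "((\<lambda>s. f (z + s *\<^sub>R h)) has_derivative (\<lambda>s. D (s *\<^sub>R h))) (at t)"
    using diff_chain_at[of "\<lambda>s. z + s *\<^sub>R h" _ t f] assms by (simp add: o_def)
  moreover have "(\<lambda>s. D (s *\<^sub>R h)) = (*) (D h)"
    by (auto simp: fun_eq_iff blinfun.scaleR_right)
  ultimately show ?thesis by (simp add: has_field_derivative_def)
qed

lemma derivative_along_ray_estimate:
  fixes D :: "'a::real_normed_vector \<Rightarrow> ('a \<Rightarrow>\<^sub>L real)"
  assumes DH: "(D has_derivative H) (at z)" and "D z = 0" and "\<epsilon> > 0"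
  obtains \<rho> where "\<rho> > 0"
    "\<And>h t. norm h < \<rho> \<Longrightarrow> 0 \<le> t \<Longrightarrow> t \<le> 1 \<Longrightarrow> \<bar>D (z + t *\<^sub>R h) h - t * H h h\<bar> \<le> \<epsilon> * t * (norm h)\<^sup>2"
proof -
  have H: "bounded_linear H" using DH has_derivative_bounded_linear by blast
  obtain \<rho> where "\<rho> > 0"
    and approx: "\<And>y. norm (y - z) < \<rho> \<Longrightarrow> norm (D y - D z - H (y - z)) \<le> \<epsilon> * norm (y - z)"
    using DH[unfolded has_derivative_at_alt] \<open>\<epsilon> > 0\<close> by blast
  have "\<bar>D (z + t *\<^sub>R h) h - t * H h h\<bar> \<le> \<epsilon> * t * (norm h)\<^sup>2"
    if h: "norm h < \<rho>" and t: "0 \<le> t" "t \<le> 1" for h t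
  proof -
    have "t * norm h < \<rho>" using h t by (meson le_less_trans mult_left_le_one_le norm_ge_zero)
    have "D (z + t *\<^sub>R h) h - t * H h h = (D (z + t *\<^sub>R h) - D z - H (t *\<^sub>R h)) h"
      using quadratic_form_scaleR[OF H, of t h 1] \<open>D z = 0\<close> by (simp add: blinfun.diff_left)
    also have "\<bar>\<dots>\<bar> \<le> norm (D (z + t *\<^sub>R h) - D z - H (t *\<^sub>R h)) * norm h"
      by (metis norm_blinfun real_norm_def)
    also have "\<dots> \<le> \<epsilon> * (t * norm h) * norm h"
      using approx[of "z + t *\<^sub>R h"] \<open>t * norm h < \<rho>\<close> t by (intro mult_right_mono) auto
    finally show ?thesis by (simp add: power2_eq_square mult_ac)
  qed
  then show thesis using \<open>\<rho> > 0\<close> that by blast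
qed

text \<open>Along the ray from z to z + h the derivative of f is t H h h up to (l/2) t |h|^2, where
  H h h \<le> - l |h|^2 is the Hessian form; integrating over [0,1] gives the bounds.\<close>
lemma neg_def_hessian_quadratic_bounds:
  fixes f :: "'a::euclidean_space \<Rightarrow> real"
  assumes "neg_def_hessian f z" and max: "\<And>y. f y \<le> f z"
  obtains r c C where "r > 0" "c > 0" "C > 0"
    "\<And>h. norm h < r \<Longrightarrow> c * (norm h)\<^sup>2 \<le> f z - f (z + h) \<and> f z - f (z + h) \<le> C * (norm h)\<^sup>2"
proof -
  obtain e D H where e: "e > 0"
    and Df: "\<And>y. y \<in> ball z e \<Longrightarrow> (f has_derivative blinfun_apply (D y)) (at y)"
    and DH: "(D has_derivative H) (at z)" and neg: "\<And>v. v \<noteq> 0 \<Longrightarrow> H v v < 0"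
    using assms(1) unfolding neg_def_hessian_def by blast
  have H: "bounded_linear H" using DH has_derivative_bounded_linear by blast
  obtain l where l: "l > 0" and Hl: "\<And>v. H v v \<le> - l * (norm v)\<^sup>2"
    using neg_def_quadratic_form_le[OF H neg] by blast
  obtain B where B: "B > 0" and HB: "\<And>v. \<bar>H v v\<bar> \<le> B * (norm v)\<^sup>2"
    using quadratic_form_abs_le[OF H] by blast
  have "D z = 0"
    using differential_zero_maxmin[of z UNIV f, OF _ _ Df] e max by (auto intro!: blinfun_eqI simp: fun_eq_iff)
  then obtain \<rho> where "\<rho> > 0" and err: "\<And>h t. norm h < \<rho> \<Longrightarrow> 0 \<le> t \<Longrightarrow> t \<le> 1 \<Longrightarrow>
      \<bar>D (z + t *\<^sub>R h) h - t * H h h\<bar> \<le> l / 2 * t * (norm h)\<^sup>2"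
    using derivative_along_ray_estimate[OF DH] l by (metis half_gt_zero)
  show thesis
  proof (rule that[of "min e \<rho>" "l / 4" "(B + l / 2) / 2"])
    fix h :: 'a assume h: "norm h < min e \<rho>"
    have "f (z + 0 *\<^sub>R h) + - (B + l / 2) * (norm h)\<^sup>2 / 2 \<le> f (z + 1 *\<^sub>R h) \<and>
        f (z + 1 *\<^sub>R h) \<le> f (z + 0 *\<^sub>R h) + - (l / 2) * (norm h)\<^sup>2 / 2"
    proof (rule DERIV_linear_bounds_imp_bounds)
      fix t :: real assume t: "0 \<le> t" "t \<le> 1"
      then have "norm (t *\<^sub>R h) < e" using h mult_left_le_one_le[of "norm h" t] by simp
      then show "((\<lambda>s. f (z + s *\<^sub>R h)) has_real_derivative D (z + t *\<^sub>R h) h) (at t)"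
        using Df by (intro has_real_derivative_along_ray) (simp add: dist_norm)
      have "- B * (norm h)\<^sup>2 * t \<le> t * H h h" "t * H h h \<le> - l * (norm h)\<^sup>2 * t"
        using mult_left_mono[OF HB[of h, THEN abs_le_D2] t(1)] mult_left_mono[OF Hl[of h] t(1)]
        by (simp_all add: algebra_simps)
      then show "- (B + l / 2) * (norm h)\<^sup>2 * t \<le> D (z + t *\<^sub>R h) h \<and>
          D (z + t *\<^sub>R h) h \<le> - (l / 2) * (norm h)\<^sup>2 * t"
        using err[of h t] h t unfolding abs_le_iff by (simp add: algebra_simps)
    qed
    then show "l / 4 * (norm h)\<^sup>2 \<le> f z - f (z + h) \<and> f z - f (z + h) \<le> (B + l / 2) / 2 * (norm h)\<^sup>2"
      by (simp add: field_simps)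
  qed (use e \<open>\<rho> > 0\<close> l B in auto)
qed

lemma in_lattice_iff: "in_lattice v \<longleftrightarrow> (\<forall>i. v $ i / (2 * pi) \<in> \<int>)"
proof -
  have "(\<exists>k::int. x = 2 * pi * k) \<longleftrightarrow> x / (2 * pi) \<in> \<int>" for x :: real
  proof
    assume "x / (2 * pi) \<in> \<int>"
    then obtain k :: int where "x / (2 * pi) = k" by (elim Ints_cases)
    then show "\<exists>k::int. x = 2 * pi * k" by (auto simp: field_simps)
  qed auto
  then show ?thesis unfolding in_lattice_def by blast
qed

lemma in_lattice_add: "in_lattice a \<Longrightarrow> in_lattice b \<Longrightarrow> in_lattice (a + b)"
  by (simp add: in_lattice_iff add_divide_distrib)

lemma in_lattice_uminus: "in_lattice a \<Longrightarrow> in_lattice (- a)"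
  by (simp add: in_lattice_iff)

lemma in_lattice_diff: "in_lattice a \<Longrightarrow> in_lattice b \<Longrightarrow> in_lattice (a - b)"
  using in_lattice_add[of a "- b"] in_lattice_uminus[of b] by simp

lemma in_lattice_zero: "in_lattice 0"
  by (simp add: in_lattice_iff)

lemma periodic3_eq:
  assumes "periodic3 f" "in_lattice (x - y)"
  shows "f x = f y"
proof -
  have "f (y + (x - y)) = f y" using assms unfolding periodic3_def by blast
  then show ?thesis by simp
qed

lemma in_lattice_component_cases:
  assumes "in_lattice v" "\<bar>v $ i\<bar> < 4 * pi"
  shows "v $ i \<in> {- 2 * pi, 0, 2 * pi}"
proof -
  obtain k :: int where k: "v $ i = 2 * pi * k" using assms(1) unfolding in_lattice_def by blast
  then have "2 * pi * \<bar>real_of_int k\<bar> < 2 * pi * 2" using assms(2) by (simp add: abs_mult)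
  then have "\<bar>k\<bar> < 2" by (simp add: mult_less_cancel_left_pos)
  then have "k \<in> {-1, 0, 1}" by auto
  then show ?thesis using k by auto
qed

lemma Tbox_representative: "\<exists>q\<in>Tbox. in_lattice (q - z)"
proof
  define k where "k = (\<lambda>i. 1 - \<lceil>(z $ i + pi) / (2 * pi)\<rceil>)"
  define q where "q = z + (\<chi> i. 2 * pi * of_int (k i))"
  show "in_lattice (q - z)" unfolding in_lattice_def q_def by auto
  have "- pi < q $ i \<and> q $ i \<le> pi" for i
  proof -
    define t where "t = (z $ i + pi) / (2 * pi)"
    have "q $ i = 2 * pi * (t + 1 - \<lceil>t\<rceil>) - pi"
      by (simp add: q_def k_def t_def field_simps)
    moreover have "0 < t + 1 - \<lceil>t\<rceil>" "t + 1 - \<lceil>t\<rceil> \<le> 1"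
      using ceiling_correct[of t] by linarith+
    ultimately show ?thesis by (simp add: mult_le_cancel_left1)
  qed
  then show "q \<in> Tbox" unfolding Tbox_def by blast
qed

lemma Tbox_component_abs_le:
  assumes "q \<in> Tbox" shows "\<bar>q $ i\<bar> \<le> pi"
proof -
  have "- pi < q $ i" "q $ i \<le> pi" using assms unfolding Tbox_def by auto
  then show ?thesis by linarith
qed

lemma Tbox_lattice_unique:
  assumes "a \<in> Tbox" "b \<in> Tbox" "in_lattice (a - b)"
  shows "a = b"
proof -
  have "(a - b) $ i = 0" for i
  proof -
    have "- pi < a $ i" "a $ i \<le> pi" "- pi < b $ i" "b $ i \<le> pi"
      using assms(1,2) unfolding Tbox_def by auto
    moreover from this have "(a - b) $ i \<in> {- 2 * pi, 0, 2 * pi}"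
      by (intro in_lattice_component_cases[OF assms(3)]) auto
    ultimately show ?thesis by auto
  qed
  then show ?thesis by (simp add: vec_eq_iff)
qed

lemma Tbox_subset_cbox: "Tbox \<subseteq> cbox (\<chi> i. - pi) (\<chi> i. pi)"
  unfolding Tbox_def by (auto simp: mem_box_cart less_imp_le)

lemma Tbox_borel: "Tbox \<in> sets borel"
proof -
  have "Tbox = (\<Inter>i. {x::real^3. - pi < x $ i} \<inter> {x. x $ i \<le> pi})"
    unfolding Tbox_def by auto
  also have "\<dots> \<in> sets borel"
    by (rule sets.countable_INT'')
      (auto intro!: sets.Int borel_open borel_closed open_Collect_less closed_Collect_le continuous_intros)
  finally show ?thesis .
qed

lemma norm_le_of_Tbox:
  assumes "q \<in> Tbox" shows "norm q \<le> 3 * pi"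
proof -
  have "norm q \<le> (\<Sum>i\<in>UNIV. \<bar>q $ i\<bar>)" by (rule norm_le_l1_cart)
  also have "\<dots> \<le> (\<Sum>i\<in>(UNIV::3 set). pi)" by (intro sum_mono Tbox_component_abs_le[OF assms])
  finally show ?thesis by simp
qed

text \<open>The lattice vectors that are differences of two points of the closed box [-pi,pi]^3.\<close>
definition neighbour_shifts :: "(real^3) set" where
  "neighbour_shifts = {v. \<forall>i. v $ i \<in> {- 2 * pi, 0, 2 * pi}}"

lemma finite_neighbour_shifts: "finite neighbour_shifts"
proof -
  have "finite (vec_nth -` (PiE (UNIV::3 set) (\<lambda>_. {- 2 * pi, 0, 2 * pi})))"
    by (intro finite_vimageI finite_PiE) (auto simp: inj_def vec_eq_iff)
  moreover have "neighbour_shifts = vec_nth -` (PiE UNIV (\<lambda>_. {- 2 * pi, 0, 2 * pi}))"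
    unfolding neighbour_shifts_def by (auto simp: PiE_def extensional_def)
  ultimately show ?thesis by simp
qed

lemma neighbour_shifts_in_lattice:
  assumes "v \<in> neighbour_shifts" shows "in_lattice v"
proof (unfold in_lattice_iff, intro allI)
  fix i
  have "v $ i \<in> {- 2 * pi, 0, 2 * pi}" using assms by (simp add: neighbour_shifts_def)
  then show "v $ i / (2 * pi) \<in> \<int>" by auto
qed

lemma in_lattice_imp_neighbour_shift:
  "in_lattice v \<Longrightarrow> (\<And>i. \<bar>v $ i\<bar> < 4 * pi) \<Longrightarrow> v \<in> neighbour_shifts"
  unfolding neighbour_shifts_def using in_lattice_component_cases by blast

lemma emeasure_lborel_cube:
  fixes q :: "real^3"
  assumes "c \<le> d"
  shows "emeasure lborel (cbox (q + (\<chi> i. c)) (q + (\<chi> i. d))) = ennreal ((d - c) ^ 3)"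
    and "emeasure lborel (box (q + (\<chi> i. c)) (q + (\<chi> i. d))) = ennreal ((d - c) ^ 3)"
proof -
  have const: "(\<chi> i. e) \<bullet> b = e" if "b \<in> Basis" for e :: real and b :: "real^3"
    using that by (auto simp: Basis_vec_def inner_axis)
  have le: "\<And>b. b \<in> Basis \<Longrightarrow> (q + (\<chi> i. c)) \<bullet> b \<le> (q + (\<chi> i. d)) \<bullet> b"
    using assms by (simp add: inner_add_left const)
  have "(\<Prod>b\<in>(Basis::(real^3) set). ((q + (\<chi> i. d)) - (q + (\<chi> i. c))) \<bullet> b) = (d - c) ^ 3"
    using DIM_cart[where 'a=real and 'b=3] by (simp add: inner_diff_left const)
  moreover have "ennreal ((d - c) ^ 3) = (\<Prod>b\<in>(Basis::(real^3) set). ennreal (d - c))"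
    using assms DIM_cart[where 'a=real and 'b=3] by (simp add: ennreal_power)
  ultimately show "emeasure lborel (cbox (q + (\<chi> i. c)) (q + (\<chi> i. d))) = ennreal ((d - c) ^ 3)"
    and "emeasure lborel (box (q + (\<chi> i. c)) (q + (\<chi> i. d))) = ennreal ((d - c) ^ 3)"
    using emeasure_lborel_cbox[OF le] emeasure_lborel_box[OF le] assms
    by (simp_all add: inner_diff_left const)
qed

lemma cball_subset_cube: "cball (z::real^3) r \<subseteq> cbox (z + (\<chi> i. - r)) (z + (\<chi> i. r))"
proof
  fix q assume "q \<in> cball z r"
  then have "\<bar>(q - z) $ i\<bar> \<le> r" for i
    using component_le_norm_cart[of "q - z" i] by (simp add: dist_norm norm_minus_commute)
  then show "q \<in> cbox (z + (\<chi> i. - r)) (z + (\<chi> i. r))"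
    unfolding mem_box_cart by (simp add: abs_le_iff) (smt (verit))
qed

lemma exists_dyadic_shell:
  fixes t R :: real
  assumes "0 < t" "t \<le> R"
  shows "\<exists>k. R / 2 ^ Suc k < t \<and> t \<le> R / 2 ^ k"
proof -
  obtain n where "(1 / 2 :: real) ^ n < t / R"
    using real_arch_pow_inv[of "t / R" "1 / 2"] assms by auto
  then have ex: "\<exists>n. R / 2 ^ Suc n < t"
    using assms by (intro exI[of _ n]) (simp add: field_simps power_one_over)
  define k where "k = (LEAST n. R / 2 ^ Suc n < t)"
  have "R / 2 ^ Suc k < t" unfolding k_def by (rule LeastI_ex[OF ex])
  moreover have "t \<le> R / 2 ^ k"
  proof (cases k)
    case (Suc j)
    then have "\<not> R / 2 ^ Suc j < t" using not_less_Least[of j "\<lambda>n. R / 2 ^ Suc n < t"]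
      unfolding k_def by (metis lessI)
    then show ?thesis using Suc by simp
  qed (use assms in simp)
  ultimately show ?thesis by blast
qed

lemma nn_integral_inverse_square_annulus_le:
  fixes z :: "real^3"
  assumes "\<rho> > 0"
  shows "(\<integral>\<^sup>+ q \<in> cball z \<rho> - cball z (\<rho> / 2). ennreal (1 / (norm (q - z))\<^sup>2) \<partial>lborel)
           \<le> ennreal (32 * \<rho>)"
proof -
  let ?A = "cball z \<rho> - cball z (\<rho> / 2)"
  have "(\<integral>\<^sup>+ q \<in> ?A. ennreal (1 / (norm (q - z))\<^sup>2) \<partial>lborel)
      \<le> (\<integral>\<^sup>+ q. ennreal ((2 / \<rho>)\<^sup>2) * indicator ?A q \<partial>lborel)"
  proof (intro nn_integral_mono)
    fix q
    have "1 / (norm (q - z))\<^sup>2 \<le> 1 / (\<rho> / 2)\<^sup>2" if "\<rho> / 2 < norm (q - z)"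
      using that assms by (intro divide_left_mono power_mono mult_pos_pos) auto
    then show "ennreal (1 / (norm (q - z))\<^sup>2) * indicator ?A q \<le> ennreal ((2 / \<rho>)\<^sup>2) * indicator ?A q"
      by (auto simp: indicator_def dist_norm norm_minus_commute power_divide intro: ennreal_leI)
  qed
  also have "\<dots> = ennreal ((2 / \<rho>)\<^sup>2) * emeasure lborel ?A"
    by (rule nn_integral_cmult_indicator) auto
  also have "\<dots> \<le> ennreal ((2 / \<rho>)\<^sup>2) * emeasure lborel (cbox (z + (\<chi> i. - \<rho>)) (z + (\<chi> i. \<rho>)))"
    using cball_subset_cube[of z \<rho>] by (intro mult_left_mono emeasure_mono) auto
  also have "\<dots> = ennreal ((2 / \<rho>)\<^sup>2 * (2 * \<rho>) ^ 3)"
    using emeasure_lborel_cube(1)[of "- \<rho>" \<rho> z] assms by (simp add: ennreal_mult)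
  also have "(2 / \<rho>)\<^sup>2 * (2 * \<rho>) ^ 3 = 32 * \<rho>"
    using assms by (simp add: field_simps power2_eq_square power3_eq_cube)
  finally show ?thesis .
qed

lemma cball_minus_centre_eq_dyadic_annuli:
  assumes "R > 0"
  shows "cball z R - {z} = (\<Union>k::nat. cball z (R / 2 ^ k) - cball z (R / 2 ^ Suc k))"
proof (intro equalityI subsetI)
  fix q assume "q \<in> cball z R - {z}"
  then obtain k where "R / 2 ^ Suc k < dist z q" "dist z q \<le> R / 2 ^ k"
    using exists_dyadic_shell[of "dist z q" R] by auto
  then show "q \<in> (\<Union>k. cball z (R / 2 ^ k) - cball z (R / 2 ^ Suc k))" by auto
next
  fix q assume "q \<in> (\<Union>k. cball z (R / 2 ^ k) - cball z (R / 2 ^ Suc k))"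
  then obtain k where "dist z q \<le> R / 2 ^ k" "R / 2 ^ Suc k < dist z q" by auto
  moreover have "R / 2 ^ k \<le> R" "0 < R / 2 ^ Suc k" using assms by (simp_all add: field_simps)
  ultimately show "q \<in> cball z R - {z}" by auto
qed

lemma disjoint_family_dyadic_annuli:
  assumes "R > 0"
  shows "disjoint_family (\<lambda>k::nat. cball z (R / 2 ^ k) - cball z (R / 2 ^ Suc k))"
  unfolding disjoint_family_on_def
proof (intro ballI impI)
  fix m n :: nat assume "m \<noteq> n"
  have "(cball z (R / 2 ^ k) - cball z (R / 2 ^ Suc k)) \<inter> (cball z (R / 2 ^ l) - cball z (R / 2 ^ Suc l)) = {}"
    if "k < l" for k l
  proof -
    have "R / 2 ^ l \<le> R / 2 ^ Suc k" using assms that by (intro divide_left_mono power_increasing) auto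
    then show ?thesis using subset_cball by blast
  qed
  then show "(cball z (R / 2 ^ m) - cball z (R / 2 ^ Suc m)) \<inter> (cball z (R / 2 ^ n) - cball z (R / 2 ^ Suc n)) = {}"
    using \<open>m \<noteq> n\<close> by (metis Int_commute nat_neq_iff)
qed

lemma nn_integral_inverse_square_cball_finite:
  fixes z :: "real^3"
  assumes R: "R > 0"
  shows "(\<integral>\<^sup>+ q \<in> cball z R. ennreal (1 / (norm (q - z))\<^sup>2) \<partial>lborel) < \<infinity>"
proof -
  define h where "h = (\<lambda>q::real^3. ennreal (1 / (norm (q - z))\<^sup>2))"
  define S where "S = (\<lambda>k::nat. cball z (R / 2 ^ k) - cball z (R / 2 ^ Suc k))"
  \<comment> \<open>the centre does not count, since h z = ennreal (1 / 0) = 0\<close>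
  have "(\<integral>\<^sup>+ q \<in> cball z R. h q \<partial>lborel) = (\<integral>\<^sup>+ q \<in> cball z R - {z}. h q \<partial>lborel)"
  proof (intro nn_integral_cong)
    fix q
    show "h q * indicator (cball z R) q = h q * indicator (cball z R - {z}) q"
      by (cases "q = z") (simp_all add: h_def indicator_def)
  qed
  also have "\<dots> = (\<integral>\<^sup>+ q \<in> (\<Union>k. S k). h q \<partial>lborel)"
    by (simp add: cball_minus_centre_eq_dyadic_annuli[OF R] S_def)
  also have "\<dots> = (\<Sum>k. (\<integral>\<^sup>+ q \<in> S k. h q \<partial>lborel))"
    using disjoint_family_dyadic_annuli[OF R]
    by (intro nn_integral_disjoint_family) (auto simp: h_def S_def)
  also have "\<dots> \<le> (\<Sum>k. ennreal (32 * R * (1 / 2) ^ k))"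
  proof (intro suminf_le allI summableI)
    fix k :: nat
    have "(\<integral>\<^sup>+ q \<in> S k. h q \<partial>lborel) \<le> ennreal (32 * (R / 2 ^ k))"
      unfolding S_def h_def using nn_integral_inverse_square_annulus_le[of "R / 2 ^ k" z] R
      by (simp add: field_simps)
    then show "(\<integral>\<^sup>+ q \<in> S k. h q \<partial>lborel) \<le> ennreal (32 * R * (1 / 2) ^ k)"
      by (simp add: power_one_over)
  qed
  also have "\<dots> = ennreal (\<Sum>k. 32 * R * (1 / 2) ^ k)"
    using R by (intro suminf_ennreal2) (auto intro!: summable_mult summable_geometric)
  also have "\<dots> < \<infinity>" by simp
  finally show ?thesis unfolding h_def .
qed

lemma suminf_ennreal_const_eq_top:
  assumes "c > (0::real)"
  shows "(\<Sum>k::nat. ennreal c) = \<infinity>"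
proof -
  have "(\<Sum>k::nat. ennreal c) = (SUP n. of_nat n) * ennreal c"
    by (simp add: suminf_eq_SUP SUP_mult_right_ennreal)
  then show ?thesis using assms by (simp add: ennreal_SUP_of_nat_eq_top)
qed

lemma nn_integral_inverse_fourth_corner_cube_ge:
  fixes q0 :: "real^3"
  assumes "\<rho> > 0"
  shows "ennreal (1 / (1296 * \<rho>))
           \<le> (\<integral>\<^sup>+ q \<in> box (q0 + (\<chi> i. - (2 * \<rho>))) (q0 + (\<chi> i. - \<rho>)). ennreal (1 / (norm (q - q0)) ^ 4) \<partial>lborel)"
proof -
  let ?C = "box (q0 + (\<chi> i. - (2 * \<rho>))) (q0 + (\<chi> i. - \<rho>))"
  have "1 / (6 * \<rho>) ^ 4 \<le> 1 / (norm (q - q0)) ^ 4" if "q \<in> ?C" for q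
  proof -
    have comp: "\<rho> < \<bar>(q - q0) $ i\<bar> \<and> \<bar>(q - q0) $ i\<bar> < 2 * \<rho>" for i
    proof -
      have "q0 $ i - 2 * \<rho> < q $ i" "q $ i < q0 $ i - \<rho>" using that unfolding mem_box_cart by auto
      then show ?thesis using assms by simp
    qed
    have "norm (q - q0) \<le> (\<Sum>i\<in>UNIV. \<bar>(q - q0) $ i\<bar>)" by (rule norm_le_l1_cart)
    also have "\<dots> < (\<Sum>i\<in>(UNIV::3 set). 2 * \<rho>)" by (intro sum_strict_mono) (use comp in auto)
    finally have "norm (q - q0) < 6 * \<rho>" by simp
    moreover have "0 < norm (q - q0)"
      using comp[of 1] component_le_norm_cart[of "q - q0" 1] assms by linarith
    ultimately show ?thesis by (intro divide_left_mono power_mono mult_pos_pos) auto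
  qed
  then have "(\<integral>\<^sup>+ q. ennreal (1 / (6 * \<rho>) ^ 4) * indicator ?C q \<partial>lborel)
      \<le> (\<integral>\<^sup>+ q \<in> ?C. ennreal (1 / (norm (q - q0)) ^ 4) \<partial>lborel)"
    by (intro nn_integral_mono) (auto simp: indicator_def intro: ennreal_leI)
  moreover have "(\<integral>\<^sup>+ q. ennreal (1 / (6 * \<rho>) ^ 4) * indicator ?C q \<partial>lborel)
      = ennreal (1 / (6 * \<rho>) ^ 4 * \<rho> ^ 3)"
    using emeasure_lborel_cube(2)[of "- (2 * \<rho>)" "- \<rho>" q0] assms
    by (simp add: nn_integral_cmult_indicator ennreal_mult'[symmetric])
  moreover have "1 / (6 * \<rho>) ^ 4 * \<rho> ^ 3 = 1 / (1296 * \<rho>)"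
    using assms by (simp add: field_simps power_mult_distrib power3_eq_cube power4_eq_xxxx)
  ultimately show ?thesis by simp
qed

lemma corner_cube_subset_ball_Tbox:
  fixes q0 :: "real^3"
  assumes "q0 \<in> Tbox" "0 < \<rho>" "6 * \<rho> < s" "\<And>i. 2 * \<rho> \<le> q0 $ i + pi"
  shows "box (q0 + (\<chi> i. - (2 * \<rho>))) (q0 + (\<chi> i. - \<rho>)) \<subseteq> ball q0 s \<inter> Tbox"
proof
  fix q assume "q \<in> box (q0 + (\<chi> i. - (2 * \<rho>))) (q0 + (\<chi> i. - \<rho>))"
  then have comp: "q0 $ i - 2 * \<rho> < q $ i \<and> q $ i < q0 $ i - \<rho>" for i
    unfolding mem_box_cart by auto
  have "\<bar>(q - q0) $ i\<bar> < 2 * \<rho>" for i using comp[of i] assms(2) by (simp add: abs_less_iff)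
  then have "(\<Sum>i\<in>UNIV. \<bar>(q - q0) $ i\<bar>) < (\<Sum>i\<in>(UNIV::3 set). 2 * \<rho>)" by (intro sum_strict_mono) auto
  then have "norm (q - q0) < 6 * \<rho>" using norm_le_l1_cart[of "q - q0"] by simp
  then have "q \<in> ball q0 s" using assms(3) by (simp add: dist_norm norm_minus_commute)
  moreover have "- pi < q $ i \<and> q $ i \<le> pi" for i
  proof -
    have "q0 $ i \<le> pi" using assms(1) by (simp add: Tbox_def)
    then show ?thesis using comp[of i] assms(4)[of i] assms(2) by linarith
  qed
  ultimately show "q \<in> ball q0 s \<inter> Tbox" unfolding Tbox_def by blast
qed

text \<open>Disjoint cubes approaching q0 from the corner where every coordinate is smaller; they stay
  inside Tbox because its faces at -pi are open, and each contributes the same lower bound.\<close>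
lemma nn_integral_inverse_fourth_ball_Tbox:
  fixes q0 :: "real^3"
  assumes q0: "q0 \<in> Tbox" and s: "s > 0"
  shows "(\<integral>\<^sup>+ q \<in> ball q0 s \<inter> Tbox. ennreal (1 / (norm (q - q0)) ^ 4) \<partial>lborel) = \<infinity>"
proof -
  define h where "h = (\<lambda>q::real^3. ennreal (1 / (norm (q - q0)) ^ 4))"
  have "0 < q0 $ i + pi" for i using q0 unfolding Tbox_def by (smt (verit) mem_Collect_eq)
  then have "0 < Min (range (\<lambda>i. q0 $ i + pi))" by (subst Min_gr_iff) auto
  then obtain a where a: "a > 0" "3 * a < s" "\<And>i. a \<le> q0 $ i + pi"
    using s by (intro that[of "min (s / 4) (Min (range (\<lambda>i. q0 $ i + pi)))"]) (auto simp: min_le_iff_disj)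
  define \<rho> where "\<rho> = (\<lambda>k::nat. a / 2 ^ Suc k)"
  have \<rho>: "0 < \<rho> k" "2 * \<rho> k \<le> a" for k
    using a(1) by (auto simp: \<rho>_def field_simps intro: order_trans[OF _ one_le_power])
  define C where "C = (\<lambda>k. box (q0 + (\<chi> i. - (2 * \<rho> k))) (q0 + (\<chi> i. - \<rho> k)))"
  have disj: "disjoint_family C"
    unfolding disjoint_family_on_def
  proof (intro ballI impI)
    fix m n :: nat assume "m \<noteq> n"
    have "C k \<inter> C l = {}" if "k < l" for k l
    proof -
      have "(2::real) ^ Suc k \<le> 2 ^ l" using that by (intro power_increasing) auto
      then have "a / 2 ^ l \<le> a / 2 ^ Suc k" using a by (intro divide_left_mono) auto
      then have "2 * \<rho> l \<le> \<rho> k" by (simp add: \<rho>_def)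
      moreover have "q $ 1 < q0 $ 1 - \<rho> k" "q0 $ 1 - 2 * \<rho> l < q $ 1" if "q \<in> C k" "q \<in> C l" for q
        using that unfolding C_def mem_box_cart by auto
      ultimately show ?thesis by force
    qed
    then show "C m \<inter> C n = {}" using \<open>m \<noteq> n\<close> by (metis Int_commute nat_neq_iff)
  qed
  have "\<infinity> = (\<Sum>k. ennreal (1 / (1296 * a)))"
    using a by (intro suminf_ennreal_const_eq_top[symmetric]) simp
  also have "\<dots> \<le> (\<Sum>k. (\<integral>\<^sup>+ q \<in> C k. h q \<partial>lborel))"
  proof (intro suminf_le allI summableI)
    fix k
    have "1 / (1296 * a) \<le> 1 / (1296 * \<rho> k)" using \<rho>[of k] by (intro divide_left_mono) auto
    then show "ennreal (1 / (1296 * a)) \<le> (\<integral>\<^sup>+ q \<in> C k. h q \<partial>lborel)"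
      using nn_integral_inverse_fourth_corner_cube_ge[OF \<rho>(1)[of k], of q0]
      unfolding C_def h_def by (auto intro: order_trans[OF ennreal_leI])
  qed
  also have "\<dots> = (\<integral>\<^sup>+ q \<in> (\<Union>k. C k). h q \<partial>lborel)"
    by (rule nn_integral_disjoint_family[OF _ _ disj, symmetric]) (auto simp: h_def C_def)
  also have "\<dots> \<le> (\<integral>\<^sup>+ q \<in> ball q0 s \<inter> Tbox. h q \<partial>lborel)"
  proof (intro nn_set_integral_set_mono UN_least)
    fix k
    have "6 * \<rho> k < s" "\<And>i. 2 * \<rho> k \<le> q0 $ i + pi" using \<rho>(2)[of k] a by (auto intro: order_trans)
    then show "C k \<subseteq> ball q0 s \<inter> Tbox" unfolding C_def by (intro corner_cube_subset_ball_Tbox[OF q0 \<rho>(1)])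
  qed
  finally show ?thesis unfolding h_def by (simp add: top_unique)
qed

lemma Tbox_sets_lebesgue: "Tbox \<in> sets lebesgue"
  using Tbox_borel by simp

lemma AE_T3_in_Tbox: "AE q in T3. q \<in> Tbox"
  by (rule AE_I2) (simp add: T3_def)

lemma nn_integral_T3: "nn_integral T3 f = (\<integral>\<^sup>+ x. f x * indicator Tbox x \<partial>lborel)"
  unfolding T3_def by (simp add: nn_integral_restrict_space Tbox_sets_lebesgue nn_integral_completion)

lemma borel_measurable_T3: "f \<in> borel_measurable borel \<Longrightarrow> f \<in> borel_measurable T3"
  unfolding T3_def by (intro measurable_restrict_space1 measurable_completion) simp

lemma AE_T3_neq: "AE q in T3. q \<noteq> c"
  unfolding T3_def
proof (subst AE_restrict_space_iff)
  show "AE x in lebesgue. x \<in> Tbox \<longrightarrow> x \<noteq> c"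
    using AE_completion[OF AE_lborel_singleton[of c]] by (rule AE_mp) auto
qed (use Tbox_sets_lebesgue in simp)

lemma borel_measurable_T3_AE_eq:
  fixes f g :: "real^3 \<Rightarrow> real"
  assumes "g \<in> borel_measurable T3" "AE x in T3. f x = g x"
  shows "f \<in> borel_measurable T3"
proof -
  have "(\<lambda>x. if x \<in> Tbox then g x else 0) \<in> borel_measurable lebesgue"
    using assms(1) Tbox_sets_lebesgue unfolding T3_def by (rule borel_measurable_if_I)
  moreover have "AE x in lebesgue. (if x \<in> Tbox then g x else 0) = (if x \<in> Tbox then f x else 0)"
    using assms(2) Tbox_sets_lebesgue unfolding T3_def
    by (subst (asm) AE_restrict_space_iff) (auto elim: AE_mp)
  ultimately have "(\<lambda>x. if x \<in> Tbox then f x else 0) \<in> borel_measurable lebesgue"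
    by (rule borel_measurable_AE)
  then show ?thesis unfolding T3_def using borel_measurable_if[OF Tbox_sets_lebesgue] by blast
qed

lemma finite_measure_T3: "finite_measure T3"
proof (rule finite_measureI)
  have "emeasure T3 (space T3) = emeasure lborel Tbox"
    unfolding T3_def using Tbox_borel by (simp add: emeasure_restrict_space)
  also have "\<dots> \<le> emeasure lborel (cbox (\<chi> i. - pi) (\<chi> i. pi) :: (real^3) set)"
    by (rule emeasure_mono[OF Tbox_subset_cbox]) simp
  also have "\<dots> = ennreal ((2 * pi) ^ 3)" using emeasure_lborel_cube(1)[of "- pi" pi 0] by simp
  also have "\<dots> < \<infinity>" by simp
  finally show "emeasure T3 (space T3) \<noteq> \<infinity>" by simp
qed

lemma integrable_T3_inverse_square: "integrable T3 (\<lambda>q. 1 / (norm (q - z))\<^sup>2)"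
proof -
  define R where "R = norm z + 3 * pi"
  have "Tbox \<subseteq> cball z R"
  proof
    fix q assume "q \<in> Tbox"
    then show "q \<in> cball z R"
      using norm_le_of_Tbox[of q] norm_triangle_ineq4[of z q] by (simp add: R_def dist_norm)
  qed
  then have "(\<integral>\<^sup>+ q. ennreal (norm (1 / (norm (q - z))\<^sup>2)) \<partial>T3)
      \<le> (\<integral>\<^sup>+ q \<in> cball z R. ennreal (1 / (norm (q - z))\<^sup>2) \<partial>lborel)"
    unfolding nn_integral_T3 by (intro nn_integral_mono) (auto simp: indicator_def)
  also have "\<dots> < \<infinity>"
    by (rule nn_integral_inverse_square_cball_finite) (simp add: R_def add_nonneg_pos)
  finally show ?thesis
    by (intro integrableI_bounded borel_measurable_T3) auto
qed

lemma integrable_T3_if_inverse_square_bound: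
  fixes f :: "real^3 \<Rightarrow> real"
  assumes "f \<in> borel_measurable T3" "finite V" "B \<ge> 0"
    and bound: "\<And>q. q \<in> Tbox \<Longrightarrow> q \<notin> V \<Longrightarrow> \<bar>f q\<bar> \<le> A \<or> (\<exists>v\<in>V. \<bar>f q\<bar> \<le> B / (norm (q - v))\<^sup>2)"
  shows "integrable T3 f"
proof (rule Bochner_Integration.integrable_bound)
  show "integrable T3 (\<lambda>q. \<bar>A\<bar> + (\<Sum>v\<in>V. B * (1 / (norm (q - v))\<^sup>2)))"
    by (intro Bochner_Integration.integrable_add finite_measure.integrable_const[OF finite_measure_T3]
        Bochner_Integration.integrable_sum Bochner_Integration.integrable_mult_right
        integrable_T3_inverse_square)
  have G: "\<bar>f q\<bar> \<le> \<bar>A\<bar> + (\<Sum>v\<in>V. B * (1 / (norm (q - v))\<^sup>2))" if "q \<in> Tbox" "q \<notin> V" for q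
  proof -
    have "B / (norm (q - v))\<^sup>2 \<le> (\<Sum>v\<in>V. B * (1 / (norm (q - v))\<^sup>2))" if "v \<in> V" for v
      using member_le_sum[OF that _ assms(2), of "\<lambda>v. B * (1 / (norm (q - v))\<^sup>2)"] assms(3) by simp
    moreover have "0 \<le> (\<Sum>v\<in>V. B * (1 / (norm (q - v))\<^sup>2))" using assms(3) by (simp add: sum_nonneg)
    ultimately show ?thesis using bound[OF that] by force
  qed
  have "AE q in T3. \<forall>v\<in>V. q \<noteq> v"
    using assms(2) by (rule eventually_ball_finite) (simp add: AE_T3_neq)
  then show "AE q in T3. norm (f q) \<le> norm (\<bar>A\<bar> + (\<Sum>v\<in>V. B * (1 / (norm (q - v))\<^sup>2)))"
    using AE_T3_in_Tbox by eventually_elim (use G in \<open>auto intro: order_trans[OF _ abs_ge_self]\<close>)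
qed (fact assms(1))

lemma not_integrable_T3_if_inverse_fourth_bound:
  fixes f :: "real^3 \<Rightarrow> real"
  assumes "q0 \<in> Tbox" "s > 0" "\<kappa> > 0"
    and bound: "\<And>q. q \<in> Tbox \<Longrightarrow> q \<in> ball q0 s \<Longrightarrow> q \<noteq> q0 \<Longrightarrow> \<kappa> / (norm (q - q0)) ^ 4 \<le> \<bar>f q\<bar>"
  shows "\<not> integrable T3 f"
proof
  have [measurable]: "ball q0 s \<in> sets borel" by simp
  assume "integrable T3 f"
  then have "(\<integral>\<^sup>+ q. ennreal (norm (f q)) \<partial>T3) < \<infinity>" by (simp add: integrable_iff_bounded)
  moreover have "(\<integral>\<^sup>+ q. ennreal (norm (f q)) \<partial>T3)
      \<ge> (\<integral>\<^sup>+ q. ennreal \<kappa> * (ennreal (1 / (norm (q - q0)) ^ 4) * indicator (ball q0 s) q) \<partial>T3)"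
  proof (intro nn_integral_mono_AE, use AE_T3_in_Tbox in eventually_elim)
    case (elim q)
    then show ?case
      using bound[of q] assms(3) by (cases "q = q0") (auto simp: indicator_def ennreal_mult'[symmetric] intro!: ennreal_leI)
  qed
  moreover have "(\<integral>\<^sup>+ q. ennreal \<kappa> * (ennreal (1 / (norm (q - q0)) ^ 4) * indicator (ball q0 s) q) \<partial>T3)
      = ennreal \<kappa> * (\<integral>\<^sup>+ q. ennreal (1 / (norm (q - q0)) ^ 4) * indicator (ball q0 s) q \<partial>T3)"
    by (intro nn_integral_cmult borel_measurable_T3) measurable
  moreover have "(\<integral>\<^sup>+ q. ennreal (1 / (norm (q - q0)) ^ 4) * indicator (ball q0 s) q \<partial>T3) = \<infinity>"
    using nn_integral_inverse_fourth_ball_Tbox[OF assms(1,2)]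
    unfolding nn_integral_T3 by (simp add: indicator_inter_arith mult.assoc)
  ultimately show False using assms(3) by (simp add: ennreal_mult_top)
qed

lemma abs_divide_le:
  fixes a x :: real
  assumes "\<bar>a\<bar> \<le> A" "0 < d" "d \<le> x"
  shows "\<bar>a / x\<bar> \<le> A / d"
proof -
  have "\<bar>a / x\<bar> = \<bar>a\<bar> / x" using assms(2,3) by simp
  also have "\<dots> \<le> A / d" using assms by (intro frac_le) auto
  finally show ?thesis .
qed

lemma continuous_on_bounded_Tbox:
  fixes f :: "real^3 \<Rightarrow> real"
  assumes "continuous_on UNIV f"
  obtains P where "\<And>q. q \<in> Tbox \<Longrightarrow> \<bar>f q\<bar> \<le> P"
proof -
  have "compact (f ` cbox (\<chi> i. - pi) (\<chi> i. pi))"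
    by (intro compact_continuous_image continuous_on_subset[OF assms]) auto
  then obtain P where "\<And>x. x \<in> f ` cbox (\<chi> i. - pi) (\<chi> i. pi) \<Longrightarrow> norm x \<le> P"
    using compact_imp_bounded bounded_iff by metis
  then show thesis using that Tbox_subset_cbox by (metis image_eqI real_norm_def subsetD)
qed

lemma Delta_eq_0_iff:
  assumes "\<mu> \<noteq> 0"
  shows "Delta w \<phi> \<mu> p = 0 \<longleftrightarrow> \<mu> = mu_p w \<phi> p"
proof -
  define I where "I = (LINT s|T3. (\<phi> s)\<^sup>2 / (Mth w p - w p s))"
  have "1 - \<mu> * I = 0 \<longleftrightarrow> \<mu> = 1 / I" using assms by (cases "I = 0") (auto simp: field_simps)
  then show ?thesis unfolding Delta_def mu_p_def I_def .
qed

locale threshold_setting =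
  fixes \<phi> :: "real^3 \<Rightarrow> real" and w :: "real^3 \<Rightarrow> real^3 \<Rightarrow> real" and p z0 :: "real^3"
  assumes phi_periodic: "periodic3 \<phi>" and phi_analytic: "real_analytic_on UNIV \<phi>"
    and w_periodic: "periodic3 (w p)" and w_continuous: "continuous_on UNIV (w p)"
    and w_max: "\<And>q. w p q \<le> w p z0" and w_max_unique: "\<And>q. w p q = w p z0 \<Longrightarrow> in_lattice (q - z0)"
    and w_nondeg: "neg_def_hessian (w p) z0"
begin

definition peak :: "real^3" where
  "peak = (SOME q. q \<in> Tbox \<and> in_lattice (q - z0))"

lemma peak: "peak \<in> Tbox" "in_lattice (peak - z0)"
  using someI_ex[of "\<lambda>q. q \<in> Tbox \<and> in_lattice (q - z0)"] Tbox_representative[of z0]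
  unfolding peak_def by blast+

lemma Mth_eq: "Mth w p = w p z0"
  unfolding Mth_def
proof (rule cSup_eq_maximum)
  show "w p z0 \<in> w p ` Tbox"
    using peak periodic3_eq[OF w_periodic peak(2)] by (metis image_eqI)
qed (use w_max in auto)

lemma Mth_minus_ge: "0 \<le> Mth w p - w p q"
  using w_max by (simp add: Mth_eq)

lemma Mth_minus_pos:
  assumes "q \<in> Tbox" "q \<noteq> peak" shows "0 < Mth w p - w p q"
proof -
  have "w p q \<noteq> w p z0"
  proof
    assume "w p q = w p z0"
    then have "in_lattice (q - peak)"
      using in_lattice_diff[OF w_max_unique peak(2)] by simp
    then show False using Tbox_lattice_unique[OF assms(1) peak(1)] assms(2) by blast
  qed
  then show ?thesis using w_max[of q] by (simp add: Mth_eq)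
qed

lemma AE_Mth_minus_pos: "AE q in T3. 0 < Mth w p - w p q"
  using AE_T3_in_Tbox AE_T3_neq[of peak] by eventually_elim (rule Mth_minus_pos)

lemma borel_measurable_phi [measurable]: "\<phi> \<in> borel_measurable borel"
  using real_analytic_on_imp_continuous_on[OF phi_analytic] by (rule borel_measurable_continuous_onI)

lemma borel_measurable_w [measurable]: "w p \<in> borel_measurable borel"
  using w_continuous by (rule borel_measurable_continuous_onI)

lemma threshold_near_peak:
  obtains r c C K where "r > 0" "c > 0" "C > 0"
    "\<And>q v. in_lattice v \<Longrightarrow> norm (q - (peak + v)) < r \<Longrightarrow>
       c * (norm (q - (peak + v)))\<^sup>2 \<le> Mth w p - w p q \<and> Mth w p - w p q \<le> C * (norm (q - (peak + v)))\<^sup>2"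
    "\<And>q v. in_lattice v \<Longrightarrow> norm (q - (peak + v)) < r \<Longrightarrow> \<bar>\<phi> q - \<phi> z0\<bar> \<le> K * norm (q - (peak + v))"
proof -
  obtain r0 c C where "r0 > 0" "c > 0" "C > 0" and bounds: "\<And>h. norm h < r0 \<Longrightarrow>
      c * (norm h)\<^sup>2 \<le> w p z0 - w p (z0 + h) \<and> w p z0 - w p (z0 + h) \<le> C * (norm h)\<^sup>2"
    using neg_def_hessian_quadratic_bounds[OF w_nondeg w_max] by blast
  obtain K \<rho> where "\<rho> > 0" and lip: "\<And>y. dist y z0 < \<rho> \<Longrightarrow> \<bar>\<phi> y - \<phi> z0\<bar> \<le> K * dist y z0"
    using real_analytic_on_lipschitz_at[OF phi_analytic] by blast
  show thesis
  proof (rule that[of "min r0 \<rho>" c C K])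
    fix q v assume v: "in_lattice v" and q: "norm (q - (peak + v)) < min r0 \<rho>"
    define h where "h = q - (peak + v)"
    have "in_lattice (q - (z0 + h))"
      using in_lattice_add[OF peak(2) v] by (simp add: h_def algebra_simps)
    then have "w p q = w p (z0 + h)" "\<phi> q = \<phi> (z0 + h)"
      by (simp_all add: periodic3_eq[OF w_periodic] periodic3_eq[OF phi_periodic])
    then show "c * (norm h)\<^sup>2 \<le> Mth w p - w p q \<and> Mth w p - w p q \<le> C * (norm h)\<^sup>2"
      and "\<bar>\<phi> q - \<phi> z0\<bar> \<le> K * norm h"
      using bounds[of h] lip[of "z0 + h"] q by (simp_all add: h_def Mth_eq dist_norm)
  qed (use \<open>r0 > 0\<close> \<open>\<rho> > 0\<close> \<open>c > 0\<close> \<open>C > 0\<close> in auto)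
qed

lemma near_peak_or_far:
  assumes r: "r > 0"
  obtains m where "m > 0"
    "\<And>q. q \<in> Tbox \<Longrightarrow> m \<le> Mth w p - w p q \<or> (\<exists>v\<in>neighbour_shifts. norm (q - (peak + v)) < r)"
proof -
  define K where "K = cbox (\<chi> i. - pi) (\<chi> i. pi) \<inter> (\<Inter>v\<in>neighbour_shifts. {q. r \<le> norm (q - (peak + v))})"
  have K_or_near: "q \<in> K \<or> (\<exists>v\<in>neighbour_shifts. norm (q - (peak + v)) < r)" if "q \<in> Tbox" for q
    using that Tbox_subset_cbox not_le unfolding K_def by blast
  show thesis
  proof (cases "K = {}")
    case True
    then show thesis using K_or_near by (intro that[of 1]) auto
  next
    case False
    have "compact K" unfolding K_def
      by (intro compact_Int_closed compact_cbox closed_INT) (auto intro!: closed_Collect_le continuous_intros)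
    moreover have "continuous_on K (\<lambda>q. Mth w p - w p q)"
      using w_continuous by (intro continuous_intros) (auto intro: continuous_on_subset)
    ultimately obtain q1 where q1: "q1 \<in> K" and min: "\<And>q. q \<in> K \<Longrightarrow> Mth w p - w p q1 \<le> Mth w p - w p q"
      using continuous_attains_inf[OF _ False] by blast
    have "Mth w p - w p q1 \<noteq> 0"
    proof
      assume "Mth w p - w p q1 = 0"
      then have "in_lattice (q1 - peak)"
        using in_lattice_diff[OF w_max_unique peak(2)] by (simp add: Mth_eq)
      moreover have "\<bar>(q1 - peak) $ i\<bar> < 4 * pi" for i
      proof -
        have "- pi \<le> q1 $ i" "q1 $ i \<le> pi" using q1 unfolding K_def by (auto simp: mem_box_cart)
        then show ?thesis
          using Tbox_component_abs_le[OF peak(1), of i] pi_gt_zero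
          by (simp only: vector_minus_component abs_le_iff abs_less_iff) linarith
      qed
      ultimately have "q1 - peak \<in> neighbour_shifts" by (rule in_lattice_imp_neighbour_shift)
      then show False using q1 r unfolding K_def by auto
    qed
    then have "Mth w p - w p q1 > 0" using Mth_minus_ge[of q1] by linarith
    then show thesis using min K_or_near by (intro that) blast+
  qed
qed

lemma integrable_threshold_quotient: "integrable T3 (\<lambda>q. \<phi> q / (Mth w p - w p q))"
proof -
  obtain r c C K where r: "r > 0" and c: "c > 0" and bounds: "\<And>q v. in_lattice v \<Longrightarrow>
      norm (q - (peak + v)) < r \<Longrightarrow> c * (norm (q - (peak + v)))\<^sup>2 \<le> Mth w p - w p q"
    using threshold_near_peak by metis
  obtain m where m: "m > 0" and near_or_far: "\<And>q. q \<in> Tbox \<Longrightarrow>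
      m \<le> Mth w p - w p q \<or> (\<exists>v\<in>neighbour_shifts. norm (q - (peak + v)) < r)"
    using near_peak_or_far[OF r] by blast
  obtain P where P: "\<And>q. q \<in> Tbox \<Longrightarrow> \<bar>\<phi> q\<bar> \<le> P"
    using continuous_on_bounded_Tbox[OF real_analytic_on_imp_continuous_on[OF phi_analytic]] by blast
  show ?thesis
  proof (rule integrable_T3_if_inverse_square_bound[where V = "(+) peak ` neighbour_shifts"])
    show "(\<lambda>q. \<phi> q / (Mth w p - w p q)) \<in> borel_measurable T3" by (intro borel_measurable_T3) measurable
    show "finite ((+) peak ` neighbour_shifts)" using finite_neighbour_shifts by simp
    show "0 \<le> P / c" using P[OF peak(1)] c by simp
    fix q assume q: "q \<in> Tbox" "q \<notin> (+) peak ` neighbour_shifts"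
    from near_or_far[OF q(1)] show "\<bar>\<phi> q / (Mth w p - w p q)\<bar> \<le> P / m \<or>
        (\<exists>u\<in>(+) peak ` neighbour_shifts. \<bar>\<phi> q / (Mth w p - w p q)\<bar> \<le> P / c / (norm (q - u))\<^sup>2)"
    proof
      assume "m \<le> Mth w p - w p q"
      then show ?thesis using abs_divide_le[OF P[OF q(1)] m] by blast
    next
      assume "\<exists>v\<in>neighbour_shifts. norm (q - (peak + v)) < r"
      then obtain v where v: "v \<in> neighbour_shifts" "norm (q - (peak + v)) < r" by blast
      have "q \<noteq> peak + v" using q(2) v(1) by blast
      then have "0 < c * (norm (q - (peak + v)))\<^sup>2" using c by simp
      then have "\<bar>\<phi> q / (Mth w p - w p q)\<bar> \<le> P / (c * (norm (q - (peak + v)))\<^sup>2)"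
        using abs_divide_le[OF P[OF q(1)]] bounds[OF neighbour_shifts_in_lattice[OF v(1)] v(2)] by blast
      then show ?thesis using v(1) by (intro disjI2 bexI[of _ "peak + v"]) auto
    qed
  qed
qed

lemma integrable_threshold_quotient_square:
  assumes "\<phi> z0 = 0"
  shows "integrable T3 (\<lambda>q. (\<phi> q / (Mth w p - w p q))\<^sup>2)"
proof -
  obtain r c C K where r: "r > 0" and c: "c > 0" and bounds: "\<And>q v. in_lattice v \<Longrightarrow>
      norm (q - (peak + v)) < r \<Longrightarrow> c * (norm (q - (peak + v)))\<^sup>2 \<le> Mth w p - w p q"
    and lip: "\<And>q v. in_lattice v \<Longrightarrow> norm (q - (peak + v)) < r \<Longrightarrow>
      \<bar>\<phi> q - \<phi> z0\<bar> \<le> K * norm (q - (peak + v))"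
    using threshold_near_peak by metis
  obtain m where m: "m > 0" and near_or_far: "\<And>q. q \<in> Tbox \<Longrightarrow>
      m \<le> Mth w p - w p q \<or> (\<exists>v\<in>neighbour_shifts. norm (q - (peak + v)) < r)"
    using near_peak_or_far[OF r] by blast
  obtain P where P: "\<And>q. q \<in> Tbox \<Longrightarrow> \<bar>\<phi> q\<bar> \<le> P"
    using continuous_on_bounded_Tbox[OF real_analytic_on_imp_continuous_on[OF phi_analytic]] by blast
  show ?thesis
  proof (rule integrable_T3_if_inverse_square_bound[where V = "(+) peak ` neighbour_shifts"])
    show "(\<lambda>q. (\<phi> q / (Mth w p - w p q))\<^sup>2) \<in> borel_measurable T3" by (intro borel_measurable_T3) measurable
    show "finite ((+) peak ` neighbour_shifts)" using finite_neighbour_shifts by simp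
    show "0 \<le> (K / c)\<^sup>2" by simp
    fix q assume q: "q \<in> Tbox" "q \<notin> (+) peak ` neighbour_shifts"
    from near_or_far[OF q(1)] show "\<bar>(\<phi> q / (Mth w p - w p q))\<^sup>2\<bar> \<le> (P / m)\<^sup>2 \<or>
        (\<exists>u\<in>(+) peak ` neighbour_shifts. \<bar>(\<phi> q / (Mth w p - w p q))\<^sup>2\<bar> \<le> (K / c)\<^sup>2 / (norm (q - u))\<^sup>2)"
    proof
      assume "m \<le> Mth w p - w p q"
      then have "\<bar>\<phi> q / (Mth w p - w p q)\<bar> \<le> P / m" by (rule abs_divide_le[OF P[OF q(1)] m])
      from power_mono[OF this abs_ge_zero, of 2] show ?thesis
        by (simp only: power2_abs abs_power2 simp_thms)
    next
      assume "\<exists>v\<in>neighbour_shifts. norm (q - (peak + v)) < r"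
      then obtain v where v: "v \<in> neighbour_shifts" "norm (q - (peak + v)) < r" by blast
      define d where "d = norm (q - (peak + v))"
      have "q \<noteq> peak + v" using q(2) v(1) by blast
      then have d: "0 < d" by (simp add: d_def)
      have "\<bar>\<phi> q / (Mth w p - w p q)\<bar> \<le> K * d / (c * d\<^sup>2)"
        using abs_divide_le lip[OF neighbour_shifts_in_lattice[OF v(1)] v(2)]
          bounds[OF neighbour_shifts_in_lattice[OF v(1)] v(2)] c d assms
        by (simp add: d_def)
      also have "\<dots> = (K / c) / d" using d by (simp add: power2_eq_square)
      finally have "\<bar>\<phi> q / (Mth w p - w p q)\<bar> \<le> (K / c) / d" .
      from power_mono[OF this abs_ge_zero, of 2]
      have "\<bar>(\<phi> q / (Mth w p - w p q))\<^sup>2\<bar> \<le> (K / c)\<^sup>2 / d\<^sup>2"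
        by (simp add: power_divide abs_divide power_mult_distrib)
      then show ?thesis using v(1) unfolding d_def by (intro disjI2 bexI[of _ "peak + v"]) auto
    qed
  qed
qed

text \<open>Near the peak |\<phi>| stays above |\<phi>(z0)| / 2 while M - w_p is at most C |q - peak|^2,
  so the square of the quotient dominates a multiple of |q - peak|^-4.\<close>
lemma not_integrable_threshold_quotient_square:
  assumes "\<phi> z0 \<noteq> 0"
  shows "\<not> integrable T3 (\<lambda>q. (\<phi> q / (Mth w p - w p q))\<^sup>2)"
proof -
  obtain r c C K where r: "r > 0" and C: "C > 0" and bounds: "\<And>q. norm (q - peak) < r \<Longrightarrow>
      Mth w p - w p q \<le> C * (norm (q - peak))\<^sup>2"
    and lip: "\<And>q. norm (q - peak) < r \<Longrightarrow> \<bar>\<phi> q - \<phi> z0\<bar> \<le> K * norm (q - peak)"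
    using threshold_near_peak[where thesis=thesis] in_lattice_zero by (metis add.right_neutral)
  define a where "a = \<bar>\<phi> z0\<bar>"
  have a: "a > 0" using assms by (simp add: a_def)
  define s where "s = min r (a / (2 * (\<bar>K\<bar> + 1)))"
  have s: "s > 0" using r a by (simp add: s_def)
  show ?thesis
  proof (rule not_integrable_T3_if_inverse_fourth_bound[OF peak(1) s])
    show "a\<^sup>2 / (4 * C\<^sup>2) > 0" using a C by simp
    fix q assume q: "q \<in> Tbox" "q \<in> ball peak s" "q \<noteq> peak"
    define d where "d = norm (q - peak)"
    have d: "0 < d" "d < s" using q by (auto simp: d_def dist_norm norm_minus_commute)
    have "0 < Mth w p - w p q" using Mth_minus_pos[OF q(1,3)] .
    moreover have "Mth w p - w p q \<le> C * d\<^sup>2" using bounds d by (simp add: d_def s_def)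
    ultimately have den: "(Mth w p - w p q)\<^sup>2 \<le> (C * d\<^sup>2)\<^sup>2" by (intro power_mono) auto
    have "\<bar>\<phi> q - \<phi> z0\<bar> \<le> \<bar>K\<bar> * d"
      using lip[of q] d by (simp add: d_def s_def) (meson abs_ge_self mult_right_mono norm_ge_zero order_trans)
    also have "\<dots> \<le> \<bar>K\<bar> * (a / (2 * (\<bar>K\<bar> + 1)))" using d by (intro mult_left_mono) (auto simp: s_def)
    also have "\<dots> \<le> a / 2" using a by (simp add: field_simps)
    finally have "a / 2 \<le> \<bar>\<phi> q\<bar>" unfolding a_def by linarith
    from power_mono[OF this, of 2] a have num: "(a / 2)\<^sup>2 \<le> (\<phi> q)\<^sup>2" by simp
    have "a\<^sup>2 / (4 * C\<^sup>2) / d ^ 4 = (a / 2)\<^sup>2 / (C * d\<^sup>2)\<^sup>2"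
      using d C by (simp add: field_simps power2_eq_square power4_eq_xxxx)
    also have "\<dots> \<le> (\<phi> q)\<^sup>2 / (Mth w p - w p q)\<^sup>2"
      using num den \<open>0 < Mth w p - w p q\<close> by (intro frac_le) auto
    finally show "a\<^sup>2 / (4 * C\<^sup>2) / (norm (q - peak)) ^ 4 \<le> \<bar>(\<phi> q / (Mth w p - w p q))\<^sup>2\<bar>"
      by (simp add: d_def power_divide)
  qed
qed

definition threshold_integral :: real where
  "threshold_integral = (LINT s|T3. (\<phi> s)\<^sup>2 / (Mth w p - w p s))"

lemma Delta_eq: "Delta w \<phi> \<mu> p = 1 - \<mu> * threshold_integral"
  unfolding Delta_def threshold_integral_def ..

lemma mu_p_eq: "mu_p w \<phi> p = 1 / threshold_integral"
  unfolding mu_p_def threshold_integral_def ..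

lemma multiple_of_threshold_quotient:
  assumes f: "AE q in T3. f q = K * (\<phi> q / (Mth w p - w p q))"
  shows "integrable T3 f"
    and "integrable T3 (\<lambda>q. (f q)\<^sup>2) \<longleftrightarrow> K = 0 \<or> \<phi> z0 = 0"
    and "(LINT t|T3. \<phi> t * f t) = K * threshold_integral"
proof -
  have [measurable]: "\<phi> \<in> borel_measurable T3" "w p \<in> borel_measurable T3"
    by (simp_all add: borel_measurable_T3)
  have [measurable]: "f \<in> borel_measurable T3"
    by (rule borel_measurable_T3_AE_eq[OF _ f]) measurable
  have int: "integrable T3 (\<lambda>q. K * (\<phi> q / (Mth w p - w p q)))"
    using integrable_threshold_quotient by (rule Bochner_Integration.integrable_mult_right)
  have f': "AE q in T3. K * (\<phi> q / (Mth w p - w p q)) = f q" using f by eventually_elim simp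
  show "integrable T3 f" by (rule integrable_cong_AE_imp[OF int _ f']) measurable
  have sq: "AE q in T3. K\<^sup>2 * (\<phi> q / (Mth w p - w p q))\<^sup>2 = (f q)\<^sup>2"
    using f by eventually_elim (simp add: power_mult_distrib power_divide)
  show "integrable T3 (\<lambda>q. (f q)\<^sup>2) \<longleftrightarrow> K = 0 \<or> \<phi> z0 = 0"
  proof
    assume int_sq: "integrable T3 (\<lambda>q. (f q)\<^sup>2)"
    show "K = 0 \<or> \<phi> z0 = 0"
    proof (rule ccontr)
      assume "\<not> (K = 0 \<or> \<phi> z0 = 0)"
      then have K: "K \<noteq> 0" and phi: "\<phi> z0 \<noteq> 0" by auto
      have int': "integrable T3 (\<lambda>q. (f q)\<^sup>2 / K\<^sup>2)" using int_sq by simp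
      have sq': "AE q in T3. (f q)\<^sup>2 / K\<^sup>2 = (\<phi> q / (Mth w p - w p q))\<^sup>2"
        using sq by eventually_elim (use K in \<open>auto simp: field_simps\<close>)
      have "integrable T3 (\<lambda>q. (\<phi> q / (Mth w p - w p q))\<^sup>2)"
        by (rule integrable_cong_AE_imp[OF int' _ sq']) measurable
      then show False using not_integrable_threshold_quotient_square[OF phi] by contradiction
    qed
  next
    assume "K = 0 \<or> \<phi> z0 = 0"
    then have int_sq: "integrable T3 (\<lambda>q. K\<^sup>2 * (\<phi> q / (Mth w p - w p q))\<^sup>2)"
      by (elim disjE) (simp_all add: integrable_threshold_quotient_square)
    show "integrable T3 (\<lambda>q. (f q)\<^sup>2)" by (rule integrable_cong_AE_imp[OF int_sq _ sq]) measurable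
  qed
  have "AE t in T3. \<phi> t * f t = K * ((\<phi> t)\<^sup>2 / (Mth w p - w p t))"
    using f by eventually_elim (simp add: power2_eq_square)
  then have "(LINT t|T3. \<phi> t * f t) = (LINT t|T3. K * ((\<phi> t)\<^sup>2 / (Mth w p - w p t)))"
    by (rule integral_cong_AE[rotated 2]) measurable
  also have "\<dots> = K * threshold_integral"
    unfolding threshold_integral_def by (rule integral_mult_right_zero)
  finally show "(LINT t|T3. \<phi> t * f t) = K * threshold_integral" .
qed

lemma threshold_equation_iff:
  "(AE q in T3. (w p q - Mth w p) * f q + \<mu> * \<phi> q * c = 0) \<longleftrightarrow>
   (AE q in T3. f q = (\<mu> * c) * (\<phi> q / (Mth w p - w p q)))"
proof -
  have eq: "AE q in T3. ((w p q - Mth w p) * f q + \<mu> * \<phi> q * c = 0) = (f q = (\<mu> * c) * (\<phi> q / (Mth w p - w p q)))"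
    using AE_Mth_minus_pos by eventually_elim (auto simp: field_simps)
  show ?thesis
  proof
    assume "AE q in T3. (w p q - Mth w p) * f q + \<mu> * \<phi> q * c = 0"
    with eq show "AE q in T3. f q = (\<mu> * c) * (\<phi> q / (Mth w p - w p q))" by eventually_elim simp
  next
    assume "AE q in T3. f q = (\<mu> * c) * (\<phi> q / (Mth w p - w p q))"
    with eq show "AE q in T3. (w p q - Mth w p) * f q + \<mu> * \<phi> q * c = 0" by eventually_elim simp
  qed
qed

lemma mu_p_eq_of_inverse:
  assumes "\<mu> * threshold_integral = 1" shows "mu_p w \<phi> p = \<mu>"
proof -
  have "threshold_integral \<noteq> 0" using assms by auto
  then show ?thesis using assms by (simp add: mu_p_eq field_simps)
qed

lemma resonance_state_iff:
  "resonance_state w \<phi> \<mu> p f \<longleftrightarrow> \<phi> z0 \<noteq> 0 \<and> Delta w \<phi> \<mu> p = 0 \<and>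
     (\<exists>C. C \<noteq> 0 \<and> (AE q in T3. f q = C * mu_p w \<phi> p * \<phi> q / (Mth w p - w p q)))"
proof
  assume "resonance_state w \<phi> \<mu> p f"
  then obtain c where c: "c = (LINT t|T3. \<phi> t * f t)" and "\<not> integrable T3 (\<lambda>q. (f q)\<^sup>2)"
    and f: "AE q in T3. f q = (\<mu> * c) * (\<phi> q / (Mth w p - w p q))"
    unfolding resonance_state_def threshold_equation_iff by blast
  note f_props = multiple_of_threshold_quotient[OF f]
  have "\<mu> * c \<noteq> 0" "\<phi> z0 \<noteq> 0" using f_props(2) \<open>\<not> integrable T3 _\<close> by auto
  moreover have "c = \<mu> * c * threshold_integral" using f_props(3) c by simp
  ultimately have "\<mu> * threshold_integral = 1" by simp
  then have "Delta w \<phi> \<mu> p = 0" "mu_p w \<phi> p = \<mu>"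
    by (simp_all add: Delta_eq mu_p_eq_of_inverse)
  moreover have "AE q in T3. f q = c * mu_p w \<phi> p * \<phi> q / (Mth w p - w p q)"
    using f by eventually_elim (simp add: \<open>mu_p w \<phi> p = \<mu>\<close>)
  ultimately show "\<phi> z0 \<noteq> 0 \<and> Delta w \<phi> \<mu> p = 0 \<and>
      (\<exists>C. C \<noteq> 0 \<and> (AE q in T3. f q = C * mu_p w \<phi> p * \<phi> q / (Mth w p - w p q)))"
    using \<open>\<mu> * c \<noteq> 0\<close> \<open>\<phi> z0 \<noteq> 0\<close> by auto
next
  assume "\<phi> z0 \<noteq> 0 \<and> Delta w \<phi> \<mu> p = 0 \<and>
      (\<exists>C. C \<noteq> 0 \<and> (AE q in T3. f q = C * mu_p w \<phi> p * \<phi> q / (Mth w p - w p q)))"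
  then obtain C where "\<phi> z0 \<noteq> 0" and inv: "\<mu> * threshold_integral = 1" and "C \<noteq> 0"
    and f0: "AE q in T3. f q = C * mu_p w \<phi> p * \<phi> q / (Mth w p - w p q)"
    by (auto simp: Delta_eq)
  have "\<mu> \<noteq> 0" using inv by auto
  have f: "AE q in T3. f q = (\<mu> * C) * (\<phi> q / (Mth w p - w p q))"
    using f0 by eventually_elim (simp add: mu_p_eq_of_inverse[OF inv])
  note f_props = multiple_of_threshold_quotient[OF f]
  have "(LINT t|T3. \<phi> t * f t) = C" using f_props(3) inv by simp
  then show "resonance_state w \<phi> \<mu> p f"
    unfolding resonance_state_def threshold_equation_iff
    using f_props(1,2) f \<open>\<mu> \<noteq> 0\<close> \<open>C \<noteq> 0\<close> \<open>\<phi> z0 \<noteq> 0\<close> by (auto simp: mult.commute)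
qed

end

text \<open>Only the hypotheses at the point p enter the proof; the others (global maximum at (p0, q0),
  periodicity in p, analyticity of q0f, \<phi> \<noteq> 0) only serve to produce q0f.\<close>
theorem lemma2p4:
  fixes \<phi> :: "real^3 \<Rightarrow> real" and w :: "real^3 \<Rightarrow> real^3 \<Rightarrow> real"
    and p0 q0 p :: "real^3" and \<delta> \<mu> :: real and q0f :: "real^3 \<Rightarrow> real^3"
  assumes phi_per: "periodic3 \<phi>" and phi_an: "real_analytic_on UNIV \<phi>"
    and phi_nz: "\<exists>x. \<phi> x \<noteq> 0"
    and w_per1: "\<And>q. periodic3 (\<lambda>p. w p q)" and w_per2: "\<And>p. periodic3 (w p)"
    and w_an: "real_analytic_on UNIV (\<lambda>z. w (fst z) (snd z))"
    and w_max: "\<And>p q. w p q \<le> w p0 q0"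
    and w_max_unique: "\<And>p q. w p q = w p0 q0 \<Longrightarrow> in_lattice (p - p0) \<and> in_lattice (q - q0)"
    and w_nondeg: "neg_def_hessian (\<lambda>z. w (fst z) (snd z)) (p0, q0)"
    and delta_pos: "\<delta> > 0"
    and q0f_an: "\<And>i. real_analytic_on (ball p0 \<delta>) (\<lambda>p. q0f p $ i)"
    and q0f_max: "\<And>p q. p \<in> ball p0 \<delta> \<Longrightarrow> w p q \<le> w p (q0f p)"
    and q0f_unique: "\<And>p q. p \<in> ball p0 \<delta> \<Longrightarrow> w p q = w p (q0f p) \<Longrightarrow> in_lattice (q - q0f p)"
    and q0f_nondeg: "\<And>p. p \<in> ball p0 \<delta> \<Longrightarrow> neg_def_hessian (w p) (q0f p)"
    and p_in: "p \<in> ball p0 \<delta>" and mu_pos: "\<mu> > 0"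
  shows "(is_resonance w \<phi> \<mu> p \<longleftrightarrow> \<phi> (q0f p) \<noteq> 0 \<and> Delta w \<phi> \<mu> p = 0)
       \<and> (\<phi> (q0f p) \<noteq> 0 \<and> Delta w \<phi> \<mu> p = 0 \<longleftrightarrow> \<phi> (q0f p) \<noteq> 0 \<and> \<mu> = mu_p w \<phi> p)
       \<and> (is_resonance w \<phi> \<mu> p \<longrightarrow>
            (\<forall>f. resonance_state w \<phi> \<mu> p f \<longleftrightarrow>
               (\<exists>C. C \<noteq> 0 \<and> (AE q in T3. f q = C * mu_p w \<phi> p * \<phi> q / (Mth w p - w p q)))))"
proof -
  have "continuous_on UNIV (\<lambda>q. (\<lambda>z. w (fst z) (snd z)) (p, q))"
    using real_analytic_on_imp_continuous_on[OF w_an]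
    by (rule continuous_on_compose2) (auto intro!: continuous_intros)
  then interpret threshold_setting \<phi> w p "q0f p"
    using phi_per phi_an w_per2 q0f_max[OF p_in] q0f_unique[OF p_in] q0f_nondeg[OF p_in]
    by unfold_locales auto
  have "is_resonance w \<phi> \<mu> p \<longleftrightarrow> \<phi> (q0f p) \<noteq> 0 \<and> Delta w \<phi> \<mu> p = 0"
  proof
    assume "\<phi> (q0f p) \<noteq> 0 \<and> Delta w \<phi> \<mu> p = 0"
    then have "resonance_state w \<phi> \<mu> p (\<lambda>q. 1 * mu_p w \<phi> p * \<phi> q / (Mth w p - w p q))"
      by (subst resonance_state_iff) auto
    then show "is_resonance w \<phi> \<mu> p" unfolding is_resonance_def by blast
  qed (auto simp: is_resonance_def resonance_state_iff)
  then show ?thesis using Delta_eq_0_iff[of \<mu>] mu_pos resonance_state_iff by auto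
qed

end
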